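(* Suppose $\det\begin{pmatrix}\mathcal{D}_\alpha X^I\\ X^I\end{pmatrix}\neq 0$, that $\langle U_\alpha,U_\beta\rangle=0$ and $\langle V,U_\alpha\rangle=0$ hold, and that there are functions $\tilde F_I(X^J)$ with $\tilde F_I(X^J(z,\bar z))=F_I(z,\bar z)$ and $\tilde F_I=X^J\partial_J\tilde F_I$. Then there exists a function $\tilde F(X^J)$ such that $\tilde F_I=\partial_I\tilde F(X)$.
   Context: $V=\begin{pmatrix}X^I\\ F_I\end{pmatrix}$ ($I=0,\dots,n$) over an $n$-dimensional Kähler manifold with coordinates $z^\alpha$ and Kähler potential $K$, $U_\alpha=\mathcal{D}_\alpha V=\partial_\alpha V+\tfrac12(\partial_\alpha K)V$; $\langle A,B\rangle=A^T\Omega B$ with $\Omega=\begin{pmatrix}0&\mathbb{1}\\-\mathbb{1}&0\end{pmatrix}$; $\partial_I=\partial/\partial X^I$. *)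

theory Defs
  imports "HOL-Analysis.Analysis"
begin

text \<open>Local complex coordinates z = (z^alpha) on the n-dimensional Kaehler manifold
  are modelled by vectors in complex^'n; all functions of (z, zbar) are functions
  complex^'n => complex, differentiable in the real sense.\<close>

definition wirt :: "(complex^'n \<Rightarrow> complex) \<Rightarrow> 'n \<Rightarrow> complex^'n \<Rightarrow> complex" where
  "wirt f a z = (frechet_derivative f (at z) (axis a 1)
                 - \<i> * frechet_derivative f (at z) (axis a \<i>)) / 2"

definition wirtbar :: "(complex^'n \<Rightarrow> complex) \<Rightarrow> 'n \<Rightarrow> complex^'n \<Rightarrow> complex" where
  "wirtbar f a z = (frechet_derivative f (at z) (axis a 1)
                 + \<i> * frechet_derivative f (at z) (axis a \<i>)) / 2"

definition covD :: "(complex^'n \<Rightarrow> real) \<Rightarrow> (complex^'n \<Rightarrow> complex) \<Rightarrow> 'n \<Rightarrow> complex^'n \<Rightarrow> complex" where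
  "covD K f a z = wirt f a z + wirt (\<lambda>w. complex_of_real (K w)) a z * f z / 2"

definition kmetric :: "(complex^'n \<Rightarrow> real) \<Rightarrow> 'n \<Rightarrow> 'n \<Rightarrow> complex^'n \<Rightarrow> complex" where
  "kmetric K a b z = wirt (wirtbar (\<lambda>w. complex_of_real (K w)) b) a z"

definition kaehler_potential :: "(complex^'n) set \<Rightarrow> (complex^'n \<Rightarrow> real) \<Rightarrow> bool" where
  "kaehler_potential \<Omega> K \<longleftrightarrow> open \<Omega> \<and>
     (\<forall>z\<in>\<Omega>. K differentiable (at z)) \<and>
     (\<forall>z\<in>\<Omega>. \<forall>b. wirtbar (\<lambda>w. complex_of_real (K w)) b differentiable (at z)) \<and>
     (\<forall>z\<in>\<Omega>. \<forall>v::complex^'n. v \<noteq> 0 \<longrightarrow>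
        (\<Sum>a\<in>UNIV. \<Sum>b\<in>UNIV. kmetric K a b z * v$a * cnj (v$b)) \<in> \<real> \<and>
        Re (\<Sum>a\<in>UNIV. \<Sum>b\<in>UNIV. kmetric K a b z * v$a * cnj (v$b)) > 0)"

definition symp :: "((complex^'i) \<times> (complex^'i)) \<Rightarrow> ((complex^'i) \<times> (complex^'i)) \<Rightarrow> complex" where
  "symp A B = (\<Sum>I\<in>UNIV. fst A $ I * snd B $ I - snd A $ I * fst B $ I)"

definition holo_on :: "(complex^'i) set \<Rightarrow> (complex^'i \<Rightarrow> complex) \<Rightarrow> bool" where
  "holo_on U f \<longleftrightarrow> (\<forall>x\<in>U. f differentiable (at x) \<and>
       (\<forall>v. frechet_derivative f (at x) (\<i> *s v) = \<i> * frechet_derivative f (at x) v))"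

definition hpartial :: "(complex^'i \<Rightarrow> complex) \<Rightarrow> 'i \<Rightarrow> complex^'i \<Rightarrow> complex" where
  "hpartial f I x = frechet_derivative f (at x) (axis I 1)"

text \<open>Componentwise covariant derivative of a vector valued section: U_alpha = D_alpha V.\<close>
definition covDvec :: "(complex^'n \<Rightarrow> real) \<Rightarrow> (complex^'n \<Rightarrow> complex^'i) \<Rightarrow> 'n \<Rightarrow> complex^'n \<Rightarrow> complex^'i" where
  "covDvec K f a z = (\<chi> I. covD K (\<lambda>w. f w $ I) a z)"

end

theory Submission
  imports Defs
begin

(* At a point z, let A be the holomorphic Jacobian A_IJ = d_J Ft_I at X(z). Euler homogeneity and
   the chain rule give F = A X and D_a F = A D_a X, so the isotropy conditions <V,U_a> = 0 and
   <U_a,U_b> = 0 say that E (A - A^T) E^T = 0 for the invertible matrix E with rows X and D_a X.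
   Hence A is symmetric, and then Fp = X^I Ft_I / 2 is a potential:
   d_J Fp = (X^I d_I Ft_J + Ft_J) / 2 = Ft_J, by homogeneity once more. *)

lemma has_derivative_vec_lambda:
  fixes f :: "'a::euclidean_space \<Rightarrow> 'b::real_normed_vector^'i"
  assumes deriv: "\<And>J. ((\<lambda>w. f w $ J) has_derivative f' J) (at z)"
  shows "(f has_derivative (\<lambda>h. \<chi> J. f' J h)) (at z)"
proof -
  have lin: "\<And>J. linear (f' J)" using deriv has_derivative_linear by blast
  have "linear (\<lambda>h. \<chi> J. f' J h)"
    by (rule linearI) (simp_all add: vec_eq_iff linear_add[OF lin] linear_scale[OF lin])
  then have "bounded_linear (\<lambda>h. \<chi> J. f' J h)"
    using linear_conv_bounded_linear by blast
  moreover have "((\<lambda>y. ((f y $ J - f z $ J) - f' J (y - z)) /\<^sub>R norm (y - z)) \<longlongrightarrow> 0) (at z)" for J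
    using deriv unfolding has_derivative_def by (simp add: Lim_ident_at)
  then have "((\<lambda>y. \<chi> J. ((f y $ J - f z $ J) - f' J (y - z)) /\<^sub>R norm (y - z))
      \<longlongrightarrow> (\<chi> J. 0)) (at z)"
    by (rule tendsto_vec_lambda)
  moreover have "(\<lambda>y. \<chi> J. ((f y $ J - f z $ J) - f' J (y - z)) /\<^sub>R norm (y - z))
      = (\<lambda>y. ((f y - f z) - (\<chi> J. f' J (y - z))) /\<^sub>R norm (y - z))"
    by (auto simp: vec_eq_iff)
  ultimately show ?thesis
    unfolding has_derivative_def by (simp add: Lim_ident_at zero_vec_def)
qed

lemma complex_linear_eq_sum_axis:
  fixes L :: "complex^'i \<Rightarrow> complex"
  assumes lin: "linear L" and cl: "\<And>v. L (\<i> *s v) = \<i> * L v"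
  shows "L v = (\<Sum>J\<in>UNIV. v$J * L (axis J 1))"
proof -
  have scale: "L (c *s w) = c * L w" for c w
  proof -
    have "c *s w = Re c *\<^sub>R w + Im c *\<^sub>R (\<i> *s w)"
      by (simp add: vec_eq_iff complex_eq_iff algebra_simps)
    then have "L (c *s w) = Re c *\<^sub>R L w + Im c *\<^sub>R L (\<i> *s w)"
      by (simp add: linear_add[OF lin] linear_scale[OF lin])
    also have "\<dots> = c * L w"
      using cl by (simp add: scaleR_conv_of_real complex_eq_iff algebra_simps)
    finally show ?thesis .
  qed
  have "L v = L (\<Sum>J\<in>UNIV. (v$J) *s axis J 1)"
    by (simp add: basis_expansion)
  also have "\<dots> = (\<Sum>J\<in>UNIV. v$J * L (axis J 1))"
    by (simp add: linear_sum[OF lin] scale)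
  finally show ?thesis .
qed

lemma frechet_derivative_holo_eq_sum_hpartial:
  assumes "holo_on U f" "x \<in> U"
  shows "frechet_derivative f (at x) v = (\<Sum>J\<in>UNIV. v$J * hpartial f J x)"
  using assms unfolding holo_on_def hpartial_def
  by (intro complex_linear_eq_sum_axis linear_frechet_derivative) auto

lemma frechet_derivative_holo_comp:
  fixes X :: "'a::euclidean_space \<Rightarrow> complex^'i"
  assumes X_diff: "\<And>J. (\<lambda>w. X w $ J) differentiable (at z)"
    and holo: "holo_on U f" and XU: "X z \<in> U"
  shows "frechet_derivative (\<lambda>w. f (X w)) (at z) h
       = (\<Sum>J\<in>UNIV. frechet_derivative (\<lambda>w. X w $ J) (at z) h * hpartial f J (X z))"
proof -
  have "(X has_derivative (\<lambda>h. \<chi> J. frechet_derivative (\<lambda>w. X w $ J) (at z) h)) (at z)"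
    by (rule has_derivative_vec_lambda) (use X_diff frechet_derivative_works in blast)
  moreover have "f differentiable (at (X z))"
    using holo XU unfolding holo_on_def by blast
  ultimately have "frechet_derivative (f \<circ> X) (at z) h
      = frechet_derivative f (at (X z)) (\<chi> J. frechet_derivative (\<lambda>w. X w $ J) (at z) h)"
    by (metis differentiableI frechet_derivative_at frechet_derivative_compose comp_apply)
  then show ?thesis
    using frechet_derivative_holo_eq_sum_hpartial[OF holo XU] by (simp add: comp_def mult.commute)
qed

lemma wirt_holo_comp:
  fixes X :: "complex^'n \<Rightarrow> complex^'i"
  assumes "\<And>J. (\<lambda>w. X w $ J) differentiable (at z)" "holo_on U f" "X z \<in> U"
  shows "wirt (\<lambda>w. f (X w)) a z = (\<Sum>J\<in>UNIV. wirt (\<lambda>w. X w $ J) a z * hpartial f J (X z))"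
  unfolding wirt_def frechet_derivative_holo_comp[OF assms]
  by (simp add: times_divide_eq_left sum_divide_distrib[symmetric] sum_subtractf sum_distrib_left
      left_diff_distrib mult.assoc)

(* Homogeneity of degree one is what lets the connection term (d_a K) f / 2 pass through f. *)
lemma covD_holo_comp_homogeneous:
  fixes X :: "complex^'n \<Rightarrow> complex^'i"
  assumes "\<And>J. (\<lambda>w. X w $ J) differentiable (at z)" "holo_on U f" "X z \<in> U"
    and euler: "f (X z) = (\<Sum>J\<in>UNIV. X z $ J * hpartial f J (X z))"
  shows "covD K (\<lambda>w. f (X w)) a z = (\<Sum>J\<in>UNIV. hpartial f J (X z) * covD K (\<lambda>w. X w $ J) a z)"
  unfolding covD_def wirt_holo_comp[OF assms(1-3)] euler
  by (simp add: sum_distrib_left sum_distrib_right sum_divide_distrib sum.distrib algebra_simps)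

lemma covD_transform_within_open:
  assumes "f differentiable (at z)" "open S" "z \<in> S" "\<And>w. w \<in> S \<Longrightarrow> f w = g w"
  shows "covD K f a z = covD K g a z"
  using frechet_derivative_transform_within_open[OF assms] assms(3,4)
  by (simp add: covD_def wirt_def)

definition hjacobian :: "('i \<Rightarrow> complex^'i \<Rightarrow> complex) \<Rightarrow> complex^'i \<Rightarrow> complex^'i^'i" where
  "hjacobian Ft x = (\<chi> I J. hpartial (Ft I) J x)"

lemma covDvec_holo_comp_homogeneous:
  fixes X F :: "complex^'n \<Rightarrow> complex^'i"
  assumes "open \<Omega>" "z \<in> \<Omega>"
    and X_diff: "\<And>J. (\<lambda>w. X w $ J) differentiable (at z)"
    and F_diff: "\<And>I. (\<lambda>w. F w $ I) differentiable (at z)"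
    and holo: "\<And>I. holo_on U (Ft I)" and XU: "X z \<in> U"
    and Ft_F: "\<And>w I. w \<in> \<Omega> \<Longrightarrow> Ft I (X w) = F w $ I"
    and euler: "\<And>I. Ft I (X z) = (\<Sum>J\<in>UNIV. X z $ J * hpartial (Ft I) J (X z))"
  shows "covDvec K F a z = hjacobian Ft (X z) *v covDvec K X a z"
proof -
  have "covD K (\<lambda>w. F w $ I) a z = covD K (\<lambda>w. Ft I (X w)) a z" for I
    using F_diff Ft_F assms(1,2) by (intro covD_transform_within_open[where S = \<Omega>]) auto
  also have "\<dots> I = (\<Sum>J\<in>UNIV. hpartial (Ft I) J (X z) * covD K (\<lambda>w. X w $ J) a z)" for I
    using X_diff holo XU euler by (rule covD_holo_comp_homogeneous)
  finally show ?thesis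
    by (simp add: vec_eq_iff covDvec_def matrix_vector_mult_def hjacobian_def)
qed

lemma symp_swap: "symp A B = - symp B A"
  by (simp add: symp_def sum_negf[symmetric] algebra_simps)

lemma symp_self: "symp A A = 0"
  using symp_swap[of A A] by simp

lemma symp_graph:
  fixes M :: "complex^'i^'i"
  shows "symp (x, M *v x) (y, M *v y) = (\<Sum>I\<in>UNIV. \<Sum>J\<in>UNIV. x$I * (M - transpose M)$I$J * y$J)"
proof -
  have "(\<Sum>I\<in>UNIV. (M *v x)$I * y$I) = (\<Sum>I\<in>UNIV. \<Sum>J\<in>UNIV. M$I$J * x$J * y$I)"
    by (simp add: matrix_vector_mult_def sum_distrib_right)
  also have "\<dots> = (\<Sum>J\<in>UNIV. \<Sum>I\<in>UNIV. M$I$J * x$J * y$I)"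
    by (rule sum.swap)
  finally have Mx: "(\<Sum>I\<in>UNIV. (M *v x)$I * y$I) = (\<Sum>I\<in>UNIV. \<Sum>J\<in>UNIV. x$I * transpose M$I$J * y$J)"
    by (simp add: transpose_def mult_ac)
  have My: "(\<Sum>I\<in>UNIV. x$I * (M *v y)$I) = (\<Sum>I\<in>UNIV. \<Sum>J\<in>UNIV. x$I * M$I$J * y$J)"
    by (simp add: matrix_vector_mult_def sum_distrib_left mult.assoc)
  show ?thesis
    by (simp add: symp_def sum_subtractf Mx My left_diff_distrib right_diff_distrib)
qed

lemma matrix_congruence_nth:
  fixes E B :: "'a::comm_semiring_1^'m^'m"
  shows "(E ** B ** transpose E)$r$s = (\<Sum>I\<in>UNIV. \<Sum>J\<in>UNIV. E$r$I * B$I$J * E$s$J)"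
proof -
  have "(E ** B ** transpose E)$r$s = (\<Sum>J\<in>UNIV. \<Sum>I\<in>UNIV. E$r$I * B$I$J * E$s$J)"
    by (simp add: matrix_matrix_mult_def transpose_def sum_distrib_right)
  also have "\<dots> = (\<Sum>I\<in>UNIV. \<Sum>J\<in>UNIV. E$r$I * B$I$J * E$s$J)"
    by (rule sum.swap)
  finally show ?thesis .
qed

lemma matrix_congruence_eq_0_imp:
  fixes E B :: "'a::field^'m^'m"
  assumes "det E \<noteq> 0" "E ** B ** transpose E = 0"
  shows "B = 0"
proof -
  obtain E' where E': "E' ** E = mat 1"
    using assms(1) invertible_det_nz invertible_def by blast
  obtain T' where T': "transpose E ** T' = mat 1"
    using assms(1) invertible_det_nz invertible_def det_transpose by metis
  have "B = E' ** (E ** B ** transpose E) ** T'"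
    by (metis E' T' matrix_mul_assoc matrix_mul_lid matrix_mul_rid)
  also have "\<dots> = 0"
    unfolding assms(2) by (simp add: matrix_matrix_mult_def zero_vec_def)
  finally show ?thesis .
qed

lemma symmetric_if_graph_isotropic:
  fixes E M :: "complex^'m^'m"
  assumes "det E \<noteq> 0" "\<And>r s. symp (E$r, M *v E$r) (E$s, M *v E$s) = 0"
  shows "transpose M = M"
proof -
  have "(E ** (M - transpose M) ** transpose E)$r$s = 0" for r s
    using assms(2)[of r s] by (simp only: matrix_congruence_nth symp_graph)
  then have "E ** (M - transpose M) ** transpose E = 0"
    by (simp add: vec_eq_iff)
  then have "M - transpose M = 0"
    by (rule matrix_congruence_eq_0_imp[OF assms(1)])
  then show ?thesis by simp
qed

definition prepotential :: "('i \<Rightarrow> complex^'i \<Rightarrow> complex) \<Rightarrow> complex^'i \<Rightarrow> complex" where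
  "prepotential Ft x = (\<Sum>I\<in>UNIV. x$I * Ft I x) / 2"

lemma has_derivative_prepotential:
  assumes "\<And>I. holo_on U (Ft I)" "x \<in> U"
  shows "(prepotential Ft has_derivative
          (\<lambda>h. (\<Sum>I\<in>UNIV. x$I * frechet_derivative (Ft I) (at x) h + h$I * Ft I x) / 2)) (at x)"
proof -
  have "(Ft I has_derivative frechet_derivative (Ft I) (at x)) (at x)" for I
    using assms frechet_derivative_works unfolding holo_on_def by blast
  then have "((\<lambda>x. \<Sum>I\<in>UNIV. x$I * Ft I x) has_derivative
      (\<lambda>h. \<Sum>I\<in>UNIV. x$I * frechet_derivative (Ft I) (at x) h + h$I * Ft I x)) (at x)"
    by (intro has_derivative_sum has_derivative_mult bounded_linear_imp_has_derivative
        bounded_linear_vec_nth)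
  then show ?thesis
    unfolding prepotential_def by (rule bounded_linear.has_derivative[OF bounded_linear_divide])
qed

lemma holo_on_prepotential:
  assumes holo: "\<And>I. holo_on U (Ft I)"
  shows "holo_on U (prepotential Ft)"
  unfolding holo_on_def
proof (intro ballI conjI allI)
  fix x assume "x \<in> U"
  note deriv = has_derivative_prepotential[OF holo this]
  show "prepotential Ft differentiable (at x)"
    using deriv by (rule differentiableI)
  fix v
  have "frechet_derivative (Ft I) (at x) (\<i> *s v) = \<i> * frechet_derivative (Ft I) (at x) v" for I
    using holo \<open>x \<in> U\<close> unfolding holo_on_def by blast
  then show "frechet_derivative (prepotential Ft) (at x) (\<i> *s v)
      = \<i> * frechet_derivative (prepotential Ft) (at x) v"
    unfolding frechet_derivative_at[OF deriv, symmetric]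
    by (simp add: sum_distrib_left algebra_simps)
qed

lemma hpartial_prepotential:
  assumes "\<And>I. holo_on U (Ft I)" "x \<in> U"
  shows "hpartial (prepotential Ft) J x = ((\<Sum>I\<in>UNIV. x$I * hpartial (Ft I) J x) + Ft J x) / 2"
  unfolding hpartial_def frechet_derivative_at[OF has_derivative_prepotential[OF assms], symmetric]
  by (simp add: sum.distrib axis_def flip: of_bool_def)

lemma hpartial_prepotential_eq_if_symmetric:
  assumes "\<And>I. holo_on U (Ft I)" "x \<in> U"
    and euler: "Ft J x = (\<Sum>I\<in>UNIV. x$I * hpartial (Ft J) I x)"
    and sym: "transpose (hjacobian Ft x) = hjacobian Ft x"
  shows "hpartial (prepotential Ft) J x = Ft J x"
proof -
  have "hpartial (Ft I) J x = hpartial (Ft J) I x" for I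
    using sym by (simp add: vec_eq_iff hjacobian_def transpose_def)
  then show ?thesis
    using euler by (simp add: hpartial_prepotential[OF assms(1,2)])
qed

theorem lemma6:
  fixes \<Omega> :: "(complex^'n) set"
    and K :: "complex^'n \<Rightarrow> real"
    and X F :: "complex^'n \<Rightarrow> complex^('n option)"
    and U :: "(complex^('n option)) set"
    and Ft :: "'n option \<Rightarrow> complex^('n option) \<Rightarrow> complex"
  assumes kaehler: "kaehler_potential \<Omega> K"
    and X_diff: "\<forall>z\<in>\<Omega>. \<forall>I. (\<lambda>w. X w $ I) differentiable (at z)"
    and F_diff: "\<forall>z\<in>\<Omega>. \<forall>I. (\<lambda>w. F w $ I) differentiable (at z)"
    and det_nz: "\<forall>z\<in>\<Omega>. det (\<chi> r c. case r of None \<Rightarrow> X z $ c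
                                          | Some a \<Rightarrow> covD K (\<lambda>w. X w $ c) a z) \<noteq> 0"
    and UU: "\<forall>z\<in>\<Omega>. \<forall>a b. symp (covDvec K X a z, covDvec K F a z)
                               (covDvec K X b z, covDvec K F b z) = 0"
    and VU: "\<forall>z\<in>\<Omega>. \<forall>a. symp (X z, F z) (covDvec K X a z, covDvec K F a z) = 0"
    and U_open: "open U"
    and X_in_U: "\<forall>z\<in>\<Omega>. X z \<in> U"
    and Ft_holo: "\<forall>I. holo_on U (Ft I)"
    and Ft_F: "\<forall>z\<in>\<Omega>. \<forall>I. Ft I (X z) = F z $ I"
    and Ft_euler: "\<forall>x\<in>U. \<forall>I. Ft I x = (\<Sum>J\<in>UNIV. x $ J * hpartial (Ft I) J x)"
  shows "\<exists>Fp. holo_on U Fp \<and> (\<forall>z\<in>\<Omega>. \<forall>I. Ft I (X z) = hpartial Fp I (X z))"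
proof -
  have jacobian_symmetric: "transpose (hjacobian Ft (X z)) = hjacobian Ft (X z)" if z: "z \<in> \<Omega>" for z
  proof -
    let ?A = "hjacobian Ft (X z)"
    have XU: "X z \<in> U" using X_in_U z by blast
    have euler: "Ft I (X z) = (\<Sum>J\<in>UNIV. X z $ J * hpartial (Ft I) J (X z))" for I
      using Ft_euler XU by blast
    have F_eq: "F z = ?A *v X z"
      using Ft_F z by (auto simp: vec_eq_iff matrix_vector_mult_def hjacobian_def euler mult.commute)
    have DF_eq: "covDvec K F a z = ?A *v covDvec K X a z" for a
      using kaehler X_diff F_diff Ft_holo XU Ft_F euler z unfolding kaehler_potential_def
      by (intro covDvec_holo_comp_homogeneous[where \<Omega> = \<Omega> and U = U]) auto
    define E where "E = (\<chi> r c. case r of None \<Rightarrow> X z $ c | Some a \<Rightarrow> covD K (\<lambda>w. X w $ c) a z)"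
    have rows: "E $ None = X z" "E $ Some a = covDvec K X a z" for a
      by (simp_all add: E_def covDvec_def vec_eq_iff)
    have "symp (E$r, ?A *v E$r) (E$s, ?A *v E$s) = 0" for r s
      using UU VU z symp_swap[of "(X z, F z)"]
      by (cases r; cases s) (auto simp: rows F_eq[symmetric] DF_eq[symmetric] symp_self)
    then show ?thesis
      using det_nz z unfolding E_def by (intro symmetric_if_graph_isotropic) auto
  qed
  show ?thesis
  proof (intro exI conjI ballI allI)
    show "holo_on U (prepotential Ft)"
      using Ft_holo by (intro holo_on_prepotential) blast
    fix z I assume "z \<in> \<Omega>"
    then show "Ft I (X z) = hpartial (prepotential Ft) I (X z)"
      using Ft_holo X_in_U Ft_euler jacobian_symmetric
      by (intro hpartial_prepotential_eq_if_symmetric[symmetric]) auto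
  qed
qed

end
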